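(* Let $n\ge2$, let $P$ be a partial $n$-Metric on a set $X$, and let $\{x_i\}_{i\in\mathbb{N}}$ be a Cauchy sequence in $X$. If $\{x_i\}$ has a special limit in $X$, then that special limit is unique.
   Context: Notation: $\langle a\rangle^k$ denotes the $k$-tuple $(a,\dots,a)$ inserted into an argument list. A partial $n$-Metric on $X$ is a function $P:X^n\to\mathbb{R}$ such that for all $x_1,\dots,x_n,a\in X$: (1) $P(\langle x_1\rangle^n)\le P(\langle x_1\rangle^{n-1},x_2)$; (2) $P$ is invariant under permutations of its arguments; (3) $P(\langle x_1\rangle^{n-1},x_2)=P(\langle x_1\rangle^n)$ and $P(\langle x_2\rangle^{n-1},x_1)=P(\langle x_2\rangle^n)$ iff $x_1=x_2$; (4) $P(x_1,\dots,x_n)\le P(x_1,\dots,x_{n-1},a)+P(\langle a\rangle^{n-1},x_n)-P(\langle a\rangle^n)$. $X$ carries the topology generated by the balls $B_\epsilon(x)=\{y\mid P(\langle x\rangle^{n-1},y)-P(\langle x\rangle^n)<\epsilon\}$; thus $a$ is a limit of $\{x_i\}$ iff for every $\epsilon>0$ there is $N$ with $P(\langle a\rangle^{n-1},x_i)-P(\langle a\rangle^n)<\epsilon$ for all $i>N$. $\{x_i\}$ is Cauchy with central distance $r\in\mathbb{R}$ if for every $\epsilon>0$ there is $N$ such that $|P(x_{i_1},\dots,x_{i_n})-r|<\epsilon$ for all $i_1,\dots,i_n>N$. A special limit of a Cauchy sequence with central distance $r$ is a limit $a$ with $P(\langle a\rangle^n)=r$. *)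

theory Defs
  imports Complex_Main "HOL-Library.Multiset"
begin

text \<open>Arguments of P are represented as lists of length n over the carrier X.
  replicate k a plays the role of the k-tuple (a,...,a).\<close>

definition partial_nmetric :: "nat \<Rightarrow> 'a set \<Rightarrow> ('a list \<Rightarrow> real) \<Rightarrow> bool" where
  "partial_nmetric n X P \<longleftrightarrow>
     (\<forall>x1\<in>X. \<forall>x2\<in>X. P (replicate n x1) \<le> P (replicate (n-1) x1 @ [x2])) \<and>
     (\<forall>xs ys. length xs = n \<and> set xs \<subseteq> X \<and> mset ys = mset xs \<longrightarrow> P ys = P xs) \<and>
     (\<forall>x1\<in>X. \<forall>x2\<in>X.
        (P (replicate (n-1) x1 @ [x2]) = P (replicate n x1) \<and>
         P (replicate (n-1) x2 @ [x1]) = P (replicate n x2)) \<longleftrightarrow> x1 = x2) \<and>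
     (\<forall>xs a. length xs = n \<and> set xs \<subseteq> X \<and> a \<in> X \<longrightarrow>
        P xs \<le> P (butlast xs @ [a]) + P (replicate (n-1) a @ [last xs]) - P (replicate n a))"

definition nmetric_limit :: "nat \<Rightarrow> ('a list \<Rightarrow> real) \<Rightarrow> (nat \<Rightarrow> 'a) \<Rightarrow> 'a \<Rightarrow> bool" where
  "nmetric_limit n P x a \<longleftrightarrow>
     (\<forall>\<epsilon>>0. \<exists>N. \<forall>i>N. P (replicate (n-1) a @ [x i]) - P (replicate n a) < \<epsilon>)"

definition nmetric_cauchy :: "nat \<Rightarrow> ('a list \<Rightarrow> real) \<Rightarrow> (nat \<Rightarrow> 'a) \<Rightarrow> real \<Rightarrow> bool" where
  "nmetric_cauchy n P x r \<longleftrightarrow>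
     (\<forall>\<epsilon>>0. \<exists>N. \<forall>is. length is = n \<and> (\<forall>j\<in>set is. j > N) \<longrightarrow> \<bar>P (map x is) - r\<bar> < \<epsilon>)"

definition nmetric_special_limit ::
  "nat \<Rightarrow> 'a set \<Rightarrow> ('a list \<Rightarrow> real) \<Rightarrow> (nat \<Rightarrow> 'a) \<Rightarrow> real \<Rightarrow> 'a \<Rightarrow> bool" where
  "nmetric_special_limit n X P x r a \<longleftrightarrow>
     a \<in> X \<and> nmetric_limit n P x a \<and> P (replicate n a) = r"

end

theory Submission
  imports Defs
begin

text \<open>Let \<open>a\<close>, \<open>b\<close> be special limits and \<open>y = x\<^sub>i\<close> a late term of the sequence. The triangle
  inequality through \<open>y\<close>, together with the bound
  \<open>P(y\<^sup>n\<^sup>-\<^sup>1, b) \<le> P(b\<^sup>n) + (n - 1)(P(b\<^sup>n\<^sup>-\<^sup>1, y) - P(b\<^sup>n))\<close> obtained by replacing the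
  copies of \<open>y\<close> by \<open>b\<close> one at a time, bounds \<open>P(a\<^sup>n\<^sup>-\<^sup>1, b)\<close> by an expression tending to
  \<open>r\<close> as \<open>i \<rightarrow> \<infinity>\<close>. Since \<open>P(a\<^sup>n) = r\<close> is also a lower bound, \<open>P(a\<^sup>n\<^sup>-\<^sup>1, b) = P(a\<^sup>n)\<close>, and
  symmetrically with \<open>a\<close> and \<open>b\<close> exchanged; the separation axiom gives \<open>a = b\<close>.\<close>

lemma partial_nmetric_diag_le:
  assumes "partial_nmetric n X P" "x \<in> X" "y \<in> X"
  shows "P (replicate n x) \<le> P (replicate (n-1) x @ [y])"
  using assms unfolding partial_nmetric_def by blast

lemma partial_nmetric_mset_eq:
  assumes "partial_nmetric n X P" "length xs = n" "set xs \<subseteq> X" "mset ys = mset xs"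
  shows "P ys = P xs"
  using assms unfolding partial_nmetric_def by blast

lemma partial_nmetric_eq_iff:
  assumes "partial_nmetric n X P" "x \<in> X" "y \<in> X"
  shows "P (replicate (n-1) x @ [y]) = P (replicate n x) \<and>
         P (replicate (n-1) y @ [x]) = P (replicate n y) \<longleftrightarrow> x = y"
  using assms unfolding partial_nmetric_def by blast

lemma partial_nmetric_triangle:
  assumes "partial_nmetric n X P" "length xs = n" "set xs \<subseteq> X" "z \<in> X"
  shows "P xs \<le> P (butlast xs @ [z]) + P (replicate (n-1) z @ [last xs]) - P (replicate n z)"
  using assms unfolding partial_nmetric_def by blast

lemma partial_nmetric_replicate_append_le:
  assumes pm: "partial_nmetric n X P" and "b \<in> X" "y \<in> X" "m \<le> n"
  shows "P (replicate (n-m) b @ replicate m y)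
           \<le> P (replicate n b) + real m * (P (replicate (n-1) b @ [y]) - P (replicate n b))"
  using \<open>m \<le> n\<close>
proof (induction m)
  case 0
  then show ?case by simp
next
  case (Suc m)
  let ?L = "replicate (n - Suc m) b @ replicate m y @ [y]"
  let ?M = "replicate (n - m) b @ replicate m y"
  let ?D = "P (replicate (n-1) b @ [y]) - P (replicate n b)"
  have "P (replicate (n - Suc m) b @ replicate (Suc m) y) = P ?L"
    by (simp add: replicate_append_same)
  also have "\<dots> \<le> P (butlast ?L @ [b]) + P (replicate (n-1) b @ [y]) - P (replicate n b)"
  proof -
    have "length ?L = n" "set ?L \<subseteq> X"
      using Suc.prems \<open>b \<in> X\<close> \<open>y \<in> X\<close> by auto
    then show ?thesis
      using partial_nmetric_triangle[OF pm _ _ \<open>b \<in> X\<close>] by fastforce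
  qed
  also have "P (butlast ?L @ [b]) = P ?M"
  proof (rule partial_nmetric_mset_eq[OF pm])
    have "n - m = Suc (n - Suc m)" using Suc.prems by simp
    then show "mset (butlast ?L @ [b]) = mset ?M"
      by (simp only: butlast_append) simp
  qed (use Suc.prems \<open>b \<in> X\<close> \<open>y \<in> X\<close> in \<open>auto simp del: replicate_Suc\<close>)
  finally have "P (replicate (n - Suc m) b @ replicate (Suc m) y) \<le> P ?M + ?D"
    by linarith
  moreover have "real (Suc m) * ?D = real m * ?D + ?D"
    by (simp add: algebra_simps)
  ultimately show ?case
    using Suc.IH[OF Suc_leD[OF Suc.prems]] by linarith
qed

lemma partial_nmetric_swap_le:
  assumes pm: "partial_nmetric n X P" and "n \<ge> 2" "b \<in> X" "y \<in> X"
  shows "P (replicate (n-1) y @ [b])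
           \<le> P (replicate n b) + real (n-1) * (P (replicate (n-1) b @ [y]) - P (replicate n b))"
proof -
  have "P (replicate (n-1) y @ [b]) = P (replicate 1 b @ replicate (n-1) y)"
  proof (rule partial_nmetric_mset_eq[OF pm])
    show "length (replicate 1 b @ replicate (n-1) y) = n"
      using \<open>n \<ge> 2\<close> by simp
    show "set (replicate 1 b @ replicate (n-1) y) \<subseteq> X"
      using \<open>b \<in> X\<close> \<open>y \<in> X\<close> by auto
    show "mset (replicate (n-1) y @ [b]) = mset (replicate 1 b @ replicate (n-1) y)"
      by simp
  qed
  also have "\<dots> \<le> P (replicate n b) + real (n-1) * (P (replicate (n-1) b @ [y]) - P (replicate n b))"
  proof -
    have "n - (n-1) = 1"
      using \<open>n \<ge> 2\<close> by simp
    then show ?thesis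
      using partial_nmetric_replicate_append_le[OF pm \<open>b \<in> X\<close> \<open>y \<in> X\<close>, of "n-1"]
      by (simp only: diff_le_self)
  qed
  finally show ?thesis .
qed

lemma partial_nmetric_triangle_via:
  assumes pm: "partial_nmetric n X P" and "n \<ge> 2" "a \<in> X" "b \<in> X" "y \<in> X"
  shows "P (replicate (n-1) a @ [b])
           \<le> P (replicate (n-1) a @ [y]) - P (replicate n y)
              + P (replicate n b) + real (n-1) * (P (replicate (n-1) b @ [y]) - P (replicate n b))"
proof -
  have ab: "length (replicate (n-1) a @ [b]) = n" "set (replicate (n-1) a @ [b]) \<subseteq> X"
    using assms by auto
  have "P (replicate (n-1) a @ [b])
          \<le> P (replicate (n-1) a @ [y]) + P (replicate (n-1) y @ [b]) - P (replicate n y)"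
    using partial_nmetric_triangle[OF pm ab \<open>y \<in> X\<close>] by simp
  then show ?thesis
    using partial_nmetric_swap_le[OF pm \<open>n \<ge> 2\<close> \<open>b \<in> X\<close> \<open>y \<in> X\<close>] by linarith
qed

lemma nmetric_limit_tendsto:
  assumes "partial_nmetric n X P" "a \<in> X" "\<forall>i. x i \<in> X" "nmetric_limit n P x a"
  shows "(\<lambda>i. P (replicate (n-1) a @ [x i])) \<longlonglongrightarrow> P (replicate n a)"
proof (rule LIMSEQ_I)
  fix e :: real
  assume "e > 0"
  then obtain N where N: "\<forall>i>N. P (replicate (n-1) a @ [x i]) - P (replicate n a) < e"
    using assms(4) unfolding nmetric_limit_def by blast
  have "norm (P (replicate (n-1) a @ [x i]) - P (replicate n a)) < e" if "i \<ge> Suc N" for i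
  proof -
    have "P (replicate n a) \<le> P (replicate (n-1) a @ [x i])"
      using partial_nmetric_diag_le[OF assms(1,2)] assms(3) by blast
    then show ?thesis
      using N that by (simp add: Suc_le_eq)
  qed
  then have "\<forall>i\<ge>Suc N. norm (P (replicate (n-1) a @ [x i]) - P (replicate n a)) < e"
    by blast
  then show "\<exists>N. \<forall>i\<ge>N. norm (P (replicate (n-1) a @ [x i]) - P (replicate n a)) < e" ..
qed

lemma nmetric_cauchy_diag_tendsto:
  assumes "nmetric_cauchy n P x r"
  shows "(\<lambda>i. P (replicate n (x i))) \<longlonglongrightarrow> r"
proof (rule LIMSEQ_I)
  fix e :: real
  assume "e > 0"
  then obtain N where N: "\<forall>is. length is = n \<and> (\<forall>j\<in>set is. j > N) \<longrightarrow> \<bar>P (map x is) - r\<bar> < e"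
    using assms unfolding nmetric_cauchy_def by blast
  have "\<forall>i\<ge>Suc N. norm (P (replicate n (x i)) - r) < e"
    using N[rule_format, of "replicate n _"] by simp
  then show "\<exists>N. \<forall>i\<ge>N. norm (P (replicate n (x i)) - r) < e" ..
qed

lemma special_limits_diag_eq:
  assumes n: "n \<ge> 2"
    and pm: "partial_nmetric n X P"
    and xX: "\<forall>i. x i \<in> X"
    and cauchy: "nmetric_cauchy n P x r"
    and a: "nmetric_special_limit n X P x r a"
    and b: "nmetric_special_limit n X P x r b"
  shows "P (replicate (n-1) a @ [b]) = P (replicate n a)"
proof (rule antisym)
  have "a \<in> X" "b \<in> X" and ra: "P (replicate n a) = r" and rb: "P (replicate n b) = r"
    using a b unfolding nmetric_special_limit_def by auto
  have "(\<lambda>i. P (replicate (n-1) a @ [x i])) \<longlonglongrightarrow> r"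
    using nmetric_limit_tendsto[OF pm \<open>a \<in> X\<close> xX] a ra
    unfolding nmetric_special_limit_def by blast
  moreover have "(\<lambda>i. P (replicate (n-1) b @ [x i])) \<longlonglongrightarrow> r"
    using nmetric_limit_tendsto[OF pm \<open>b \<in> X\<close> xX] b rb
    unfolding nmetric_special_limit_def by blast
  moreover note nmetric_cauchy_diag_tendsto[OF cauchy]
  ultimately have "(\<lambda>i. P (replicate (n-1) a @ [x i]) - P (replicate n (x i))
              + P (replicate n b) + real (n-1) * (P (replicate (n-1) b @ [x i]) - P (replicate n b)))
          \<longlonglongrightarrow> r - r + r + real (n-1) * (r - r)"
    unfolding rb by (intro tendsto_intros)
  moreover have "\<forall>i. P (replicate (n-1) a @ [b])
      \<le> P (replicate (n-1) a @ [x i]) - P (replicate n (x i))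
              + P (replicate n b) + real (n-1) * (P (replicate (n-1) b @ [x i]) - P (replicate n b))"
    using partial_nmetric_triangle_via[OF pm n \<open>a \<in> X\<close> \<open>b \<in> X\<close>] xX by blast
  ultimately show "P (replicate (n-1) a @ [b]) \<le> P (replicate n a)"
    unfolding ra by (intro LIMSEQ_le_const) auto
  show "P (replicate n a) \<le> P (replicate (n-1) a @ [b])"
    using partial_nmetric_diag_le[OF pm \<open>a \<in> X\<close> \<open>b \<in> X\<close>] .
qed

theorem theorem4p15:
  fixes n :: nat and X :: "'a set" and P :: "'a list \<Rightarrow> real"
    and x :: "nat \<Rightarrow> 'a" and r :: real and a b :: 'a
  assumes "n \<ge> 2"
    and "partial_nmetric n X P"
    and "\<forall>i. x i \<in> X"
    and "nmetric_cauchy n P x r"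
    and "nmetric_special_limit n X P x r a"
    and "nmetric_special_limit n X P x r b"
  shows "a = b"
proof -
  have "a \<in> X" "b \<in> X"
    using assms(5,6) unfolding nmetric_special_limit_def by auto
  moreover have "P (replicate (n-1) a @ [b]) = P (replicate n a)"
    by (rule special_limits_diag_eq[OF assms])
  moreover have "P (replicate (n-1) b @ [a]) = P (replicate n b)"
    by (rule special_limits_diag_eq[OF assms(1-4,6,5)])
  ultimately show ?thesis
    using partial_nmetric_eq_iff[OF assms(2)] by blast
qed

end
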